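(* Let $K$ be a square with edges parallel to the coordinate axes and $k\ge1$ an integer. Let $V(K)=\mathcal Q_k(K)$, $\bm W(K)=[\mathcal Q_k(K)]^2$, and $\bm M(\partial K)=\{\bm\mu:\bm\mu|_F=\bm n\times p_k\text{ for some }p_k\in\mathcal P_k(F),\text{ for each edge }F\subset\partial K\}$. Then $I_M(V(K)\times\bm W(K))=2$.
   Context: $\mathcal Q_k$ denotes polynomials in two variables of degree at most $k$ in each variable; $\mathcal P_k(F)$ polynomials of degree at most $k$ on the edge $F$. Conventions in 2D: $\nabla\times\bm v=-\partial_yv_1+\partial_xv_2$, $\nabla\times p=(\partial_yp,-\partial_xp)^T$, $\bm n\times\bm v=-n_2v_1+n_1v_2$, $\bm n\times p=(n_2p,-n_1p)^T$, $\bm n\times\bm w\times\bm n:=\bm w-(\bm w\cdot\bm n)\bm n$, $\bm n$ the unit outward normal. $I_M(V(K)\times\bm W(K)):=\dim\bm M(\partial K)-\dim\{\bm n\times v|_{\partial K}:v\in V(K),\nabla\times v=\bm0\}-\dim\{\bm n\times\bm w\times\bm n|_{\partial K}:\bm w\in\bm W(K),\nabla\times\bm w=0\}$. *)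

theory Defs
  imports "HOL-Analysis.Analysis" "HOL-Library.Function_Algebras"
begin

definition fscale :: "real \<Rightarrow> ('a \<Rightarrow> 'b::real_vector) \<Rightarrow> ('a \<Rightarrow> 'b)" where
  "fscale c f = (\<lambda>x. c *\<^sub>R f x)"

lemma vector_space_fscale: "vector_space (fscale :: real \<Rightarrow> ('a \<Rightarrow> 'b::real_vector) \<Rightarrow> _)"
  by unfold_locales (auto simp: fscale_def fun_eq_iff scaleR_add_right scaleR_add_left)

abbreviation fdim :: "('a \<Rightarrow> 'b::real_vector) set \<Rightarrow> nat" where
  "fdim S \<equiv> vector_space.dim fscale S"

definition Qk :: "nat \<Rightarrow> (real \<times> real \<Rightarrow> real) set" where
  "Qk k = {f. \<exists>c :: nat \<Rightarrow> nat \<Rightarrow> real. \<forall>x y.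
              f (x, y) = (\<Sum>i\<le>k. \<Sum>j\<le>k. c i j * x ^ i * y ^ j)}"

definition Qk2 :: "nat \<Rightarrow> (real \<times> real \<Rightarrow> real \<times> real) set" where
  "Qk2 k = {w. (fst \<circ> w) \<in> Qk k \<and> (snd \<circ> w) \<in> Qk k}"

definition square :: "real \<Rightarrow> real \<Rightarrow> real \<Rightarrow> (real \<times> real) set" where
  "square a b h = {(x, y). a \<le> x \<and> x \<le> a + h \<and> b \<le> y \<and> y \<le> b + h}"

text \<open>Edges numbered 0 (bottom), 1 (right), 2 (top), 3 (left).\<close>
definition edge :: "real \<Rightarrow> real \<Rightarrow> real \<Rightarrow> nat \<Rightarrow> (real \<times> real) set" where
  "edge a b h i =
     (if i = 0 then {(x, y). a \<le> x \<and> x \<le> a + h \<and> y = b}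
      else if i = 1 then {(x, y). x = a + h \<and> b \<le> y \<and> y \<le> b + h}
      else if i = 2 then {(x, y). a \<le> x \<and> x \<le> a + h \<and> y = b + h}
      else if i = 3 then {(x, y). x = a \<and> b \<le> y \<and> y \<le> b + h}
      else {})"

definition normal :: "nat \<Rightarrow> real \<times> real" where
  "normal i = (if i = 0 then (0, -1) else if i = 1 then (1, 0)
               else if i = 2 then (0, 1) else (-1, 0))"

text \<open>P_k(F_i): polynomials of degree at most k on edge i (in the coordinate
  varying along the edge).\<close>
definition Pk_edge :: "nat \<Rightarrow> nat \<Rightarrow> (real \<times> real \<Rightarrow> real) set" where
  "Pk_edge k i = {p. \<exists>c :: nat \<Rightarrow> real. \<forall>x y.
       p (x, y) = (\<Sum>j\<le>k. c j * (if even i then x else y) ^ j)}"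

definition dx :: "(real \<times> real \<Rightarrow> real) \<Rightarrow> real \<times> real \<Rightarrow> real" where
  "dx f p = deriv (\<lambda>t. f (t, snd p)) (fst p)"

definition dy :: "(real \<times> real \<Rightarrow> real) \<Rightarrow> real \<times> real \<Rightarrow> real" where
  "dy f p = deriv (\<lambda>t. f (fst p, t)) (snd p)"

definition curl_s :: "(real \<times> real \<Rightarrow> real) \<Rightarrow> real \<times> real \<Rightarrow> real \<times> real" where
  "curl_s v p = (dy v p, - dx v p)"

definition curl_v :: "(real \<times> real \<Rightarrow> real \<times> real) \<Rightarrow> real \<times> real \<Rightarrow> real" where
  "curl_v w p = - dy (fst \<circ> w) p + dx (snd \<circ> w) p"

text \<open>n x p = (n2 p, - n1 p) for scalar p\<close>
definition ncross_s :: "real \<times> real \<Rightarrow> real \<Rightarrow> real \<times> real" where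
  "ncross_s n q = (snd n * q, - fst n * q)"

text \<open>n x w x n = w - (w . n) n\<close>
definition ntan :: "real \<times> real \<Rightarrow> real \<times> real \<Rightarrow> real \<times> real" where
  "ntan n w = w - (fst w * fst n + snd w * snd n) *\<^sub>R n"

text \<open>A field on the boundary is represented edge by edge: mu (i, p) is the value on
  edge i at the point p of that edge; it is 0 outside (i < 4, p in edge i).\<close>
definition bd_trace :: "real \<Rightarrow> real \<Rightarrow> real \<Rightarrow> (nat \<Rightarrow> real \<times> real \<Rightarrow> real \<times> real)
     \<Rightarrow> (nat \<times> (real \<times> real) \<Rightarrow> real \<times> real)" where
  "bd_trace a b h g = (\<lambda>(i, p). if i < 4 \<and> p \<in> edge a b h i then g i p else 0)"

definition Mspace :: "nat \<Rightarrow> real \<Rightarrow> real \<Rightarrow> real \<Rightarrow> (nat \<times> (real \<times> real) \<Rightarrow> real \<times> real) set" where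
  "Mspace k a b h = {mu. (\<forall>i p. \<not> (i < 4 \<and> p \<in> edge a b h i) \<longrightarrow> mu (i, p) = 0) \<and>
      (\<forall>i<4. \<exists>q \<in> Pk_edge k i. \<forall>p \<in> edge a b h i. mu (i, p) = ncross_s (normal i) (q p))}"

definition Vtraces :: "nat \<Rightarrow> real \<Rightarrow> real \<Rightarrow> real \<Rightarrow> (nat \<times> (real \<times> real) \<Rightarrow> real \<times> real) set" where
  "Vtraces k a b h = {bd_trace a b h (\<lambda>i p. ncross_s (normal i) (v p)) | v.
      v \<in> Qk k \<and> (\<forall>p \<in> square a b h. curl_s v p = 0)}"

definition Wtraces :: "nat \<Rightarrow> real \<Rightarrow> real \<Rightarrow> real \<Rightarrow> (nat \<times> (real \<times> real) \<Rightarrow> real \<times> real) set" where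
  "Wtraces k a b h = {bd_trace a b h (\<lambda>i p. ntan (normal i) (w p)) | w.
      w \<in> Qk2 k \<and> (\<forall>p \<in> square a b h. curl_v w p = 0)}"

definition I_M :: "nat \<Rightarrow> real \<Rightarrow> real \<Rightarrow> real \<Rightarrow> int" where
  "I_M k a b h = int (fdim (Mspace k a b h)) - int (fdim (Vtraces k a b h))
                 - int (fdim (Wtraces k a b h))"

end

theory Submission
  imports Defs
begin

text \<open>
  A field in M is given by four edge polynomials of degree at most k, so dim M = 4(k+1).
  A curl-free v in Q_k is constant, so its traces form a line.
  A curl-free w in [Q_k]^2 is the gradient of a combination of monomials (x-a)^m (y-b)^n with
  m, n <= k or (m, n) in {(k+1, 0), (0, k+1)}, and its tangential trace on an edge is, up to sign,
  the derivative of the potential along that edge. The constant monomial has zero trace, and for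
  2 <= m, n <= k the monomial agrees on the boundary with a combination of those with exponents
  (m, 1), (1, n) and (1, 1). The traces of the remaining 4k+1 monomials are independent, as one
  sees by reading off their coefficients edge by edge. Hence I_M = 4(k+1) - 1 - (4k+1) = 2.
\<close>

global_interpretation fsv: vector_space "fscale :: real \<Rightarrow> ('a \<Rightarrow> 'b::real_vector) \<Rightarrow> _"
  by (rule vector_space_fscale)

lemma (in vector_space) dim_eq_card_of_independent_family:
  fixes f :: "'c \<Rightarrow> 'b"
  assumes L: "finite L"
    and indep: "\<And>c. (\<Sum>l\<in>L. scale (c l) (f l)) = 0 \<Longrightarrow> \<forall>l\<in>L. c l = 0"
    and sub: "f ` L \<subseteq> S" and spans: "S \<subseteq> span (f ` L)"
  shows "dim S = card L"
proof -
  have inj: "inj_on f L"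
  proof (rule inj_onI, rule ccontr)
    fix l1 l2 assume l: "l1 \<in> L" "l2 \<in> L" "f l1 = f l2" "l1 \<noteq> l2"
    define c :: "'c \<Rightarrow> 'a" where "c l = (if l = l1 then 1 else if l = l2 then -1 else 0)" for l
    have "scale (c l) (f l) = (if l = l1 then f l else 0) - (if l = l2 then f l else 0)" for l
      using l(4) by (simp add: c_def)
    then have "(\<Sum>l\<in>L. scale (c l) (f l)) = 0"
      using L l by (simp add: sum_subtractf sum.delta)
    from indep[OF this] l(1) have "c l1 = 0"
      by blast
    then show False
      by (simp add: c_def)
  qed
  have "independent (f ` L)"
  proof (rule independent_if_scalars_zero)
    fix u v assume u: "(\<Sum>x\<in>f ` L. scale (u x) x) = 0" and v: "v \<in> f ` L"
    have "(\<Sum>l\<in>L. scale (u (f l)) (f l)) = 0"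
      using u by (simp add: sum.reindex[OF inj])
    from indep[OF this] show "u v = 0"
      using v by blast
  qed (use L in simp)
  then show ?thesis
    using dim_unique[OF sub spans] card_image[OF inj] by blast
qed

subsection \<open>Polynomials\<close>

lemma polyfun_eq_0_on_infinite:
  fixes c :: "nat \<Rightarrow> 'a::{idom,real_normed_div_algebra}"
  assumes "infinite S" and "\<forall>x\<in>S. (\<Sum>i\<le>n. c i * x ^ i) = 0"
  shows "\<forall>i\<le>n. c i = 0"
proof (rule ccontr)
  assume "\<not> (\<forall>i\<le>n. c i = 0)"
  then have "finite {x. (\<Sum>i\<le>n. c i * x ^ i) = 0}"
    using polyfun_finite_roots by blast
  moreover have "S \<subseteq> {x. (\<Sum>i\<le>n. c i * x ^ i) = 0}"
    using assms(2) by blast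
  ultimately show False
    using assms(1) finite_subset by blast
qed

definition poly2 :: "nat \<Rightarrow> (nat \<Rightarrow> nat \<Rightarrow> real) \<Rightarrow> real \<Rightarrow> real \<Rightarrow> real" where
  "poly2 k c s t = (\<Sum>i\<le>k. \<Sum>j\<le>k. c i j * s ^ i * t ^ j)"

lemma poly2_eq_sum_in_t: "poly2 k c s t = (\<Sum>j\<le>k. (\<Sum>i\<le>k. c i j * s ^ i) * t ^ j)"
  unfolding poly2_def by (subst sum.swap) (simp add: sum_distrib_right)

lemma poly2_eq_sum_in_s: "poly2 k c s t = (\<Sum>i\<le>k. (\<Sum>j\<le>k. c i j * t ^ j) * s ^ i)"
  unfolding poly2_def by (simp add: sum_distrib_right sum_distrib_left mult_ac)

lemma poly2_eq_0_on_infinite: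
  assumes S: "infinite S" and T: "infinite T"
    and zero: "\<forall>s\<in>S. \<forall>t\<in>T. poly2 k c s t = 0"
  shows "\<forall>i\<le>k. \<forall>j\<le>k. c i j = 0"
proof -
  have "\<forall>i\<le>k. (\<Sum>j\<le>k. c i j * t ^ j) = 0" if "t \<in> T" for t
    using polyfun_eq_0_on_infinite[OF S, of "\<lambda>i. \<Sum>j\<le>k. c i j * t ^ j" k] zero that
    by (simp add: poly2_eq_sum_in_s)
  then show ?thesis
    using polyfun_eq_0_on_infinite[OF T] by blast
qed

lemma polyfun_shift:
  fixes c :: "nat \<Rightarrow> real"
  obtains d where "\<And>x. (\<Sum>i\<le>k. c i * (x + u) ^ i) = (\<Sum>i\<le>k. d i * x ^ i)"
proof -
  define p :: "real poly" where "p = pcompose (\<Sum>i\<le>k. monom (c i) i) [:u, 1:]"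
  have "degree (\<Sum>i\<le>k. monom (c i) i) \<le> k"
    by (intro degree_sum_le) (auto intro: order.trans[OF degree_monom_le])
  then have deg: "degree p \<le> k"
    by (simp add: p_def degree_pcompose)
  have "(\<Sum>i\<le>k. c i * (x + u) ^ i) = poly p x" for x
    by (simp add: p_def poly_pcompose poly_sum poly_monom add.commute)
  also have "poly p x = (\<Sum>i\<le>k. coeff p i * x ^ i)" for x
    by (subst poly_as_sum_of_monoms'[OF deg, symmetric]) (simp add: poly_sum poly_monom)
  finally show ?thesis
    by (rule that)
qed

lemma poly2_shift:
  obtains e where "\<And>s t. poly2 k c (s + u) (t + v) = poly2 k e s t"
proof -
  have "\<forall>i. \<exists>d. \<forall>t. (\<Sum>j\<le>k. c i j * (t + v) ^ j) = (\<Sum>j\<le>k. d j * t ^ j)"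
    by (metis polyfun_shift)
  then obtain d where d: "\<And>i t. (\<Sum>j\<le>k. c i j * (t + v) ^ j) = (\<Sum>j\<le>k. d i j * t ^ j)"
    by metis
  have "\<forall>j. \<exists>e. \<forall>s. (\<Sum>i\<le>k. d i j * (s + u) ^ i) = (\<Sum>i\<le>k. e i * s ^ i)"
    by (metis polyfun_shift)
  then obtain e where e: "\<And>j s. (\<Sum>i\<le>k. d i j * (s + u) ^ i) = (\<Sum>i\<le>k. e j i * s ^ i)"
    by metis
  have "poly2 k c (s + u) (t + v) = poly2 k (\<lambda>i j. e j i) s t" for s t
  proof -
    have "poly2 k c (s + u) (t + v) = poly2 k d (s + u) t"
      by (simp only: poly2_eq_sum_in_s d)
    also have "\<dots> = poly2 k (\<lambda>i j. e j i) s t"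
      by (simp only: poly2_eq_sum_in_t e)
    finally show ?thesis .
  qed
  then show ?thesis
    by (rule that)
qed

lemma poly2_monomial:
  assumes "m \<le> k" "n \<le> k"
  shows "poly2 k (\<lambda>i j. if i = m \<and> j = n then c else 0) s t = c * s ^ m * t ^ n"
proof -
  have "(\<Sum>j\<le>k. (if i = m \<and> j = n then c else 0) * s ^ i * t ^ j) = (if i = m then c * s ^ m * t ^ n else 0)" for i
    using assms by (cases "i = m") (simp_all add: if_distrib[of "\<lambda>x. x * _"] sum.delta cong: if_cong)
  then show ?thesis
    using assms by (simp add: poly2_def sum.delta)
qed

lemma poly2_cong:
  assumes "\<And>i j. i \<le> k \<Longrightarrow> j \<le> k \<Longrightarrow> c i j = d i j"
  shows "poly2 k c s t = poly2 k d s t"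
  using assms by (simp add: poly2_def)

lemma poly2_diff: "poly2 k (\<lambda>i j. c i j - d i j) s t = poly2 k c s t - poly2 k d s t"
  by (simp add: poly2_def left_diff_distrib sum_subtractf)

lemma Qk_iff_poly2: "f \<in> Qk k \<longleftrightarrow> (\<exists>c. \<forall>x y. f (x, y) = poly2 k c (x - a) (y - b))"
proof
  assume "f \<in> Qk k"
  then obtain c where c: "\<And>x y. f (x, y) = poly2 k c x y"
    by (auto simp: Qk_def poly2_def)
  obtain e where "\<And>s t. poly2 k c (s + a) (t + b) = poly2 k e s t"
    using poly2_shift by blast
  then have "f (x, y) = poly2 k e (x - a) (y - b)" for x y
    using c[of x y] by (metis diff_add_cancel)
  then show "\<exists>c. \<forall>x y. f (x, y) = poly2 k c (x - a) (y - b)"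
    by blast
next
  assume "\<exists>c. \<forall>x y. f (x, y) = poly2 k c (x - a) (y - b)"
  then obtain c where c: "\<And>x y. f (x, y) = poly2 k c (x - a) (y - b)"
    by blast
  obtain e where "\<And>s t. poly2 k c (s + - a) (t + - b) = poly2 k e s t"
    using poly2_shift by blast
  then have "f (x, y) = poly2 k e x y" for x y
    using c[of x y] by simp
  then show "f \<in> Qk k"
    by (auto simp: Qk_def poly2_def)
qed

lemma Qk_obtain_poly2:
  assumes "f \<in> Qk k"
  obtains c where "\<And>i j. k < i \<or> k < j \<Longrightarrow> c i j = 0"
    and "\<And>x y. f (x, y) = poly2 k c (x - a) (y - b)"
proof -
  obtain c where c: "\<And>x y. f (x, y) = poly2 k c (x - a) (y - b)"
    using assms Qk_iff_poly2 by blast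
  let ?c = "\<lambda>i j. if i \<le> k \<and> j \<le> k then c i j else 0"
  have "f (x, y) = poly2 k ?c (x - a) (y - b)" for x y
    unfolding c by (rule poly2_cong) simp
  then show ?thesis
    by (rule that[rotated]) auto
qed

lemma Qk_monomial:
  assumes "c = 0 \<or> (m \<le> k \<and> n \<le> k)"
  shows "(\<lambda>p. c * (fst p - a) ^ m * (snd p - b) ^ n) \<in> Qk k"
  using assms
proof
  assume "c = 0"
  then show ?thesis
    by (auto simp: Qk_def intro: exI[of _ "\<lambda>_ _. 0"])
next
  assume "m \<le> k \<and> n \<le> k"
  then show ?thesis
    by (auto simp: Qk_iff_poly2[of _ _ a b] poly2_monomial
        intro!: exI[of _ "\<lambda>i j. if i = m \<and> j = n then c else 0"])
qed

lemma deriv_polyfun_shifted: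
  fixes d :: "nat \<Rightarrow> real"
  assumes "d (Suc k) = 0"
  shows "deriv (\<lambda>t. \<Sum>i\<le>k. d i * (t - a) ^ i) x = (\<Sum>i\<le>k. of_nat (Suc i) * d (Suc i) * (x - a) ^ i)"
proof -
  have "deriv (\<lambda>t. \<Sum>i\<le>k. d i * (t - a) ^ i) x = (\<Sum>i\<le>k. d i * (of_nat i * (x - a) ^ (i - 1)))"
    by (rule DERIV_imp_deriv) (auto intro!: derivative_eq_intros sum.cong)
  also have "\<dots> = (\<Sum>i\<le>k. of_nat (Suc i) * d (Suc i) * (x - a) ^ i)"
  proof (cases k)
    case (Suc k')
    have "(\<Sum>i\<le>Suc k'. d i * (of_nat i * (x - a) ^ (i - 1)))
        = (\<Sum>i\<le>k'. of_nat (Suc i) * d (Suc i) * (x - a) ^ i)"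
      by (subst sum.atMost_Suc_shift) (simp add: mult_ac)
    also have "\<dots> = (\<Sum>i\<le>Suc k'. of_nat (Suc i) * d (Suc i) * (x - a) ^ i)"
      using assms Suc by simp
    finally show ?thesis
      using Suc by simp
  qed (use assms in simp)
  finally show ?thesis .
qed

lemma dx_poly2:
  assumes "\<And>j. c (Suc k) j = 0" and f: "\<And>x y. f (x, y) = poly2 k c (x - a) (y - b)"
  shows "dx f (x, y) = poly2 k (\<lambda>i j. of_nat (Suc i) * c (Suc i) j) (x - a) (y - b)"
proof -
  have "dx f (x, y) = deriv (\<lambda>t. \<Sum>i\<le>k. (\<Sum>j\<le>k. c i j * (y - b) ^ j) * (t - a) ^ i) x"
    by (simp add: dx_def f poly2_eq_sum_in_s)
  also have "\<dots> = poly2 k (\<lambda>i j. of_nat (Suc i) * c (Suc i) j) (x - a) (y - b)"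
    by (subst deriv_polyfun_shifted) (simp_all add: assms poly2_eq_sum_in_s sum_distrib_left mult_ac)
  finally show ?thesis .
qed

lemma dy_poly2:
  assumes "\<And>i. c i (Suc k) = 0" and f: "\<And>x y. f (x, y) = poly2 k c (x - a) (y - b)"
  shows "dy f (x, y) = poly2 k (\<lambda>i j. of_nat (Suc j) * c i (Suc j)) (x - a) (y - b)"
proof -
  have "dy f (x, y) = deriv (\<lambda>t. \<Sum>j\<le>k. (\<Sum>i\<le>k. c i j * (x - a) ^ i) * (t - b) ^ j) y"
    by (simp add: dy_def f poly2_eq_sum_in_t)
  also have "\<dots> = poly2 k (\<lambda>i j. of_nat (Suc j) * c i (Suc j)) (x - a) (y - b)"
    by (subst deriv_polyfun_shifted) (simp_all add: assms poly2_eq_sum_in_t sum_distrib_left mult_ac)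
  finally show ?thesis .
qed

subsection \<open>Fields on the boundary\<close>

definition edge_coord :: "real \<Rightarrow> real \<Rightarrow> nat \<Rightarrow> real \<times> real \<Rightarrow> real" where
  "edge_coord a b i p = (if even i then fst p - a else snd p - b)"

definition edge_point :: "real \<Rightarrow> real \<Rightarrow> real \<Rightarrow> nat \<Rightarrow> real \<Rightarrow> real \<times> real" where
  "edge_point a b h i s = (if i = 0 then (a + s, b) else if i = 1 then (a + h, b + s)
                           else if i = 2 then (a + s, b + h) else (a, b + s))"

lemma less_4_cases:
  fixes i :: nat
  assumes "i < 4"
  obtains "i = 0" | "i = 1" | "i = 2" | "i = 3"
  using assms by linarith

lemma edge_eq_image_edge_point: "i < 4 \<Longrightarrow> edge a b h i = edge_point a b h i ` {0..h}"
proof -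
  have "\<exists>s\<in>{0..h}. y = c + s" if "c \<le> y" "y \<le> c + h" for c y :: real
    using that by (intro bexI[of _ "y - c"]) auto
  then show "i < 4 \<Longrightarrow> ?thesis"
    by (elim less_4_cases) (auto simp: edge_def edge_point_def image_iff)
qed

lemma edge_coord_edge_point [simp]: "i < 4 \<Longrightarrow> edge_coord a b i (edge_point a b h i s) = s"
  by (elim less_4_cases) (simp_all add: edge_coord_def edge_point_def)

lemma bd_trace_edge_point:
  "i < 4 \<Longrightarrow> s \<in> {0..h} \<Longrightarrow> bd_trace a b h g (i, edge_point a b h i s) = g i (edge_point a b h i s)"
  by (simp add: bd_trace_def edge_eq_image_edge_point)

lemma bd_trace_eqI:
  assumes "\<And>i s. i < 4 \<Longrightarrow> s \<in> {0..h} \<Longrightarrow> g i (edge_point a b h i s) = g' i (edge_point a b h i s)"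
  shows "bd_trace a b h g = bd_trace a b h g'"
  using assms by (auto simp: bd_trace_def edge_eq_image_edge_point fun_eq_iff)

lemma sum_fun_apply: "(\<Sum>l\<in>L. F l) x = (\<Sum>l\<in>L. F l x)"
  by (induction L rule: infinite_finite_induct) auto

lemma bd_trace_lincomb:
  "bd_trace a b h (\<lambda>i p. \<Sum>l\<in>L. c l *\<^sub>R g l i p) = (\<Sum>l\<in>L. fscale (c l) (bd_trace a b h (g l)))"
  by (auto simp: bd_trace_def fun_eq_iff sum_fun_apply fscale_def)

definition edge_field :: "nat \<Rightarrow> real \<Rightarrow> real \<Rightarrow> real \<Rightarrow> (nat \<Rightarrow> nat \<Rightarrow> real)
    \<Rightarrow> nat \<times> (real \<times> real) \<Rightarrow> real \<times> real" where
  "edge_field k a b h P = bd_trace a b h (\<lambda>i p. ncross_s (normal i) (\<Sum>j\<le>k. P i j * edge_coord a b i p ^ j))"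

lemma edge_field_edge_point:
  "i < 4 \<Longrightarrow> s \<in> {0..h} \<Longrightarrow>
    edge_field k a b h P (i, edge_point a b h i s) = ncross_s (normal i) (\<Sum>j\<le>k. P i j * s ^ j)"
  by (simp add: edge_field_def bd_trace_edge_point)

lemma edge_field_cong:
  "(\<And>i j. i < 4 \<Longrightarrow> j \<le> k \<Longrightarrow> P i j = Q i j) \<Longrightarrow> edge_field k a b h P = edge_field k a b h Q"
  unfolding edge_field_def by (rule bd_trace_eqI) simp

lemma ncross_s_eq_scaleR: "ncross_s n q = q *\<^sub>R (snd n, - fst n)"
  by (simp add: ncross_s_def)

lemma ncross_s_normal_eq_0_iff: "ncross_s (normal i) q = 0 \<longleftrightarrow> q = 0"
  by (simp add: ncross_s_def normal_def zero_prod_def)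

lemma ncross_s_sum: "ncross_s n (\<Sum>l\<in>L. c l * q l) = (\<Sum>l\<in>L. c l *\<^sub>R ncross_s n (q l))"
  by (simp only: ncross_s_eq_scaleR scaleR_sum_left scaleR_scaleR)

lemma edge_field_zero: "edge_field k a b h (\<lambda>_ _. 0) = 0"
  by (simp add: edge_field_def bd_trace_def ncross_s_def fun_eq_iff zero_prod_def)

lemma edge_field_lincomb:
  "edge_field k a b h (\<lambda>i j. \<Sum>l\<in>L. c l * F l i j) = (\<Sum>l\<in>L. fscale (c l) (edge_field k a b h (F l)))"
proof -
  have "(\<Sum>j\<le>k. (\<Sum>l\<in>L. c l * F l i j) * t ^ j) = (\<Sum>l\<in>L. c l * (\<Sum>j\<le>k. F l i j * t ^ j))"
    for i :: nat and t
    by (simp add: sum_distrib_right sum_distrib_left mult_ac sum.swap[of _ L])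
  then have "ncross_s (normal i) (\<Sum>j\<le>k. (\<Sum>l\<in>L. c l * F l i j) * t ^ j)
      = (\<Sum>l\<in>L. c l *\<^sub>R ncross_s (normal i) (\<Sum>j\<le>k. F l i j * t ^ j))" for i t
    by (simp only: ncross_s_sum)
  then show ?thesis
    unfolding edge_field_def by (subst bd_trace_lincomb[symmetric]) simp
qed

lemma edge_field_eq_0D:
  assumes "h > 0" and "edge_field k a b h P = 0"
  shows "\<forall>i<4. \<forall>j\<le>k. P i j = 0"
proof (intro allI impI)
  fix i j :: nat assume i: "i < 4" and j: "j \<le> k"
  have "\<forall>s\<in>{0..h}. (\<Sum>j\<le>k. P i j * s ^ j) = 0"
    using assms(2) edge_field_edge_point[OF i, of _ h k a b P] by (simp add: ncross_s_normal_eq_0_iff)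
  then show "P i j = 0"
    using polyfun_eq_0_on_infinite[of "{0..h}"] assms(1) j by simp
qed

lemma fdim_eq_card_edge_fields:
  assumes "h > 0" and L: "finite L"
    and indep: "\<And>c. \<forall>i<4. \<forall>j\<le>k. (\<Sum>l\<in>L. c l * F l i j) = 0 \<Longrightarrow> \<forall>l\<in>L. c l = 0"
    and "(\<lambda>l. edge_field k a b h (F l)) ` L \<subseteq> S"
    and "S \<subseteq> fsv.span ((\<lambda>l. edge_field k a b h (F l)) ` L)"
  shows "fdim S = card L"
proof (rule fsv.dim_eq_card_of_independent_family[OF L _ assms(4,5)])
  fix c assume "(\<Sum>l\<in>L. fscale (c l) (edge_field k a b h (F l))) = 0"
  then have "edge_field k a b h (\<lambda>i j. \<Sum>l\<in>L. c l * F l i j) = 0"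
    by (simp add: edge_field_lincomb)
  then show "\<forall>l\<in>L. c l = 0"
    using indep edge_field_eq_0D[OF assms(1)] by blast
qed

lemma Pk_edge_iff_edge_coord: "q \<in> Pk_edge k i \<longleftrightarrow> (\<exists>c. \<forall>p. q p = (\<Sum>j\<le>k. c j * edge_coord a b i p ^ j))"
proof -
  define \<xi> where "\<xi> p = (if even i then fst p else snd p)" for p :: "real \<times> real"
  define t where "t = (if even i then a else b)"
  have coord: "edge_coord a b i p = \<xi> p - t" for p
    by (simp add: edge_coord_def \<xi>_def t_def)
  have Pk: "q \<in> Pk_edge k i \<longleftrightarrow> (\<exists>c. \<forall>p. q p = (\<Sum>j\<le>k. c j * \<xi> p ^ j))"
    by (auto simp: Pk_edge_def \<xi>_def)
  show ?thesis
  proof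
    assume "q \<in> Pk_edge k i"
    then obtain c where c: "\<And>p. q p = (\<Sum>j\<le>k. c j * \<xi> p ^ j)"
      using Pk by blast
    obtain d where "\<And>x. (\<Sum>j\<le>k. c j * (x + t) ^ j) = (\<Sum>j\<le>k. d j * x ^ j)"
      using polyfun_shift by blast
    then have "q p = (\<Sum>j\<le>k. d j * edge_coord a b i p ^ j)" for p
      using c[of p] by (metis coord diff_add_cancel)
    then show "\<exists>c. \<forall>p. q p = (\<Sum>j\<le>k. c j * edge_coord a b i p ^ j)"
      by blast
  next
    assume "\<exists>c. \<forall>p. q p = (\<Sum>j\<le>k. c j * edge_coord a b i p ^ j)"
    then obtain c where c: "\<And>p. q p = (\<Sum>j\<le>k. c j * (\<xi> p + - t) ^ j)"
      by (auto simp: coord)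
    obtain d where "\<And>x. (\<Sum>j\<le>k. c j * (x + - t) ^ j) = (\<Sum>j\<le>k. d j * x ^ j)"
      using polyfun_shift by blast
    then show "q \<in> Pk_edge k i"
      using Pk c by metis
  qed
qed

lemma Mspace_eq_range_edge_field: "Mspace k a b h = range (edge_field k a b h)"
proof (intro equalityI subsetI)
  fix \<mu> assume \<mu>: "\<mu> \<in> Mspace k a b h"
  have "\<exists>c. \<forall>p \<in> edge a b h i.
      \<mu> (i, p) = ncross_s (normal i) (\<Sum>j\<le>k. c j * edge_coord a b i p ^ j)" if i: "i < 4" for i
  proof -
    obtain q where "q \<in> Pk_edge k i" and q: "\<forall>p \<in> edge a b h i. \<mu> (i, p) = ncross_s (normal i) (q p)"
      using \<mu> i by (auto simp: Mspace_def)
    then obtain c where "\<And>p. q p = (\<Sum>j\<le>k. c j * edge_coord a b i p ^ j)"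
      using Pk_edge_iff_edge_coord by blast
    then show ?thesis
      using q by auto
  qed
  then obtain P where P: "\<And>i p. i < 4 \<Longrightarrow> p \<in> edge a b h i \<Longrightarrow>
      \<mu> (i, p) = ncross_s (normal i) (\<Sum>j\<le>k. P i j * edge_coord a b i p ^ j)"
    by metis
  have "\<mu> = edge_field k a b h P"
    using \<mu> P by (auto simp: Mspace_def edge_field_def bd_trace_def fun_eq_iff)
  then show "\<mu> \<in> range (edge_field k a b h)"
    by blast
next
  fix \<mu> assume "\<mu> \<in> range (edge_field k a b h)"
  then obtain P where "\<mu> = edge_field k a b h P"
    by blast
  moreover have "(\<lambda>p. \<Sum>j\<le>k. P i j * edge_coord a b i p ^ j) \<in> Pk_edge k i" for i
    unfolding Pk_edge_iff_edge_coord[of _ k i a b] by blast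
  ultimately show "\<mu> \<in> Mspace k a b h"
    by (auto simp: Mspace_def edge_field_def bd_trace_def)
qed

lemma fdim_Mspace:
  assumes "h > 0"
  shows "fdim (Mspace k a b h) = 4 * (k + 1)"
proof -
  define L where "L = {..<4::nat} \<times> {..k}"
  define F where "F l = (\<lambda>i j. if (i, j) = l then 1 else 0 :: real)" for l :: "nat \<times> nat"
  have coeff: "(\<Sum>l\<in>L. c l * F l i j) = c (i, j)" if "i < 4" "j \<le> k" for c i j
    using that by (simp add: F_def L_def if_distrib[of "\<lambda>x. _ * x"] sum.delta cong: if_cong)
  have "fdim (Mspace k a b h) = card L"
  proof (rule fdim_eq_card_edge_fields[OF assms])
    show "\<forall>l\<in>L. c l = 0" if "\<forall>i<4. \<forall>j\<le>k. (\<Sum>l\<in>L. c l * F l i j) = 0" for c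
      using that coeff by (force simp: L_def)
    show "(\<lambda>l. edge_field k a b h (F l)) ` L \<subseteq> Mspace k a b h"
      by (auto simp: Mspace_eq_range_edge_field)
    show "Mspace k a b h \<subseteq> fsv.span ((\<lambda>l. edge_field k a b h (F l)) ` L)"
    proof
      fix \<mu> assume "\<mu> \<in> Mspace k a b h"
      then obtain P where "\<mu> = edge_field k a b h P"
        by (auto simp: Mspace_eq_range_edge_field)
      also have "\<dots> = edge_field k a b h (\<lambda>i j. \<Sum>l\<in>L. (\<lambda>(i, j). P i j) l * F l i j)"
        by (rule edge_field_cong) (simp add: coeff)
      also have "\<dots> = (\<Sum>l\<in>L. fscale ((\<lambda>(i, j). P i j) l) (edge_field k a b h (F l)))"
        by (rule edge_field_lincomb)
      also have "\<dots> \<in> fsv.span ((\<lambda>l. edge_field k a b h (F l)) ` L)"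
        by (intro fsv.span_sum fsv.span_scale fsv.span_base) auto
      finally show "\<mu> \<in> fsv.span ((\<lambda>l. edge_field k a b h (F l)) ` L)" .
    qed
  qed (simp add: L_def)
  then show ?thesis
    by (simp add: L_def card_cartesian_product)
qed

subsection \<open>Traces of curl-free scalars\<close>

lemma poly2_eq_0_on_square:
  assumes "h > 0" and "\<forall>p \<in> square a b h. poly2 k c (fst p - a) (snd p - b) = 0"
  shows "\<forall>i\<le>k. \<forall>j\<le>k. c i j = 0"
proof (rule poly2_eq_0_on_infinite)
  show "\<forall>s\<in>{0..h}. \<forall>t\<in>{0..h}. poly2 k c s t = 0"
  proof (intro ballI)
    fix s t assume "s \<in> {0..h}" "t \<in> {0..h}"
    then have "(a + s, b + t) \<in> square a b h"
      by (simp add: square_def)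
    then show "poly2 k c s t = 0"
      using assms(2) by fastforce
  qed
qed (use assms(1) in simp_all)

lemma curl_free_Qk_is_const:
  assumes "h > 0" and "v \<in> Qk k" and curl: "\<forall>p \<in> square a b h. curl_s v p = 0"
  shows "v = (\<lambda>_. v (a, b))"
proof -
  obtain c where supp: "\<And>i j. k < i \<or> k < j \<Longrightarrow> c i j = 0"
    and v: "\<And>x y. v (x, y) = poly2 k c (x - a) (y - b)"
    using Qk_obtain_poly2[OF assms(2)] by metis
  have dx0: "poly2 k (\<lambda>i j. of_nat (Suc i) * c (Suc i) j) (x - a) (y - b) = 0"
    and dy0: "poly2 k (\<lambda>i j. of_nat (Suc j) * c i (Suc j)) (x - a) (y - b) = 0"
    if "(x, y) \<in> square a b h" for x y
    using curl that dx_poly2[OF _ v, of x y] dy_poly2[OF _ v, of x y] supp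
    by (simp_all add: curl_s_def zero_prod_def)
  have "\<forall>i\<le>k. \<forall>j\<le>k. of_nat (Suc i) * c (Suc i) j = 0"
    by (rule poly2_eq_0_on_square[OF assms(1), where a = a and b = b]) (auto simp del: of_nat_Suc intro: dx0)
  moreover have "\<forall>i\<le>k. \<forall>j\<le>k. of_nat (Suc j) * c i (Suc j) = 0"
    by (rule poly2_eq_0_on_square[OF assms(1), where a = a and b = b]) (auto simp del: of_nat_Suc intro: dy0)
  ultimately have "c (Suc i) j = 0 \<and> c i (Suc j) = 0" for i j
    using supp by (cases "i \<le> k \<and> j \<le> k") auto
  then have "c i j = (if i = 0 \<and> j = 0 then c 0 0 else 0)" for i j
    by (cases i; cases j) auto
  then have "poly2 k c s t = poly2 k (\<lambda>i j. if i = 0 \<and> j = 0 then c 0 0 else 0) s t" for s t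
    by (intro poly2_cong)
  then have "poly2 k c s t = c 0 0" for s t
    by (simp add: poly2_monomial)
  then show ?thesis
    using v by auto
qed

lemma edge_field_const:
  "edge_field k a b h (\<lambda>i j. if j = 0 then c else 0) = bd_trace a b h (\<lambda>i p. ncross_s (normal i) c)"
  unfolding edge_field_def by (rule bd_trace_eqI) (simp add: if_distrib[of "\<lambda>x. x * _"] cong: if_cong)

lemma Vtraces_eq_constant_traces:
  assumes "h > 0"
  shows "Vtraces k a b h = range (\<lambda>c. bd_trace a b h (\<lambda>i p. ncross_s (normal i) c))"
proof (intro equalityI subsetI)
  fix \<mu> assume "\<mu> \<in> Vtraces k a b h"
  then obtain v where \<mu>: "\<mu> = bd_trace a b h (\<lambda>i p. ncross_s (normal i) (v p))"
    and v: "v \<in> Qk k" "\<forall>p \<in> square a b h. curl_s v p = 0"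
    by (auto simp: Vtraces_def)
  have "\<mu> = bd_trace a b h (\<lambda>i p. ncross_s (normal i) (v (a, b)))"
    by (subst \<mu>, subst curl_free_Qk_is_const[OF assms v]) simp
  then show "\<mu> \<in> range (\<lambda>c. bd_trace a b h (\<lambda>i p. ncross_s (normal i) c))"
    by blast
next
  fix \<mu> assume "\<mu> \<in> range (\<lambda>c. bd_trace a b h (\<lambda>i p. ncross_s (normal i) c))"
  then obtain c where "\<mu> = bd_trace a b h (\<lambda>i p. ncross_s (normal i) c)"
    by auto
  moreover have "(\<lambda>_. c) \<in> Qk k"
    using Qk_monomial[of c 0 k 0 a b] by simp
  moreover have "curl_s (\<lambda>_. c) p = 0" for p
    by (simp add: curl_s_def dx_def dy_def zero_prod_def)
  ultimately show "\<mu> \<in> Vtraces k a b h"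
    unfolding Vtraces_def by (intro CollectI exI[of _ "\<lambda>_. c"]) simp
qed

lemma fdim_Vtraces:
  assumes "h > 0"
  shows "fdim (Vtraces k a b h) = 1"
proof -
  define F where "F (l :: nat) = (\<lambda>(i :: nat) (j :: nat). if j = 0 then 1 else 0 :: real)" for l
  have const: "bd_trace a b h (\<lambda>i p. ncross_s (normal i) c) = edge_field k a b h (\<lambda>i j. \<Sum>l\<in>{0}. c * F l i j)"
    for c
    unfolding edge_field_const[where k = k, symmetric] by (rule edge_field_cong) (simp add: F_def)
  have "fdim (Vtraces k a b h) = card {0::nat}"
  proof (rule fdim_eq_card_edge_fields[OF assms])
    show "\<forall>l\<in>{0}. c l = 0" if "\<forall>i<4. \<forall>j\<le>k. (\<Sum>l\<in>{0}. c l * F l i j) = 0" for c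
      using that[rule_format, of 0 0] by (simp add: F_def)
    show "(\<lambda>l. edge_field k a b h (F l)) ` {0} \<subseteq> Vtraces k a b h"
      using const[of 1] by (auto simp: Vtraces_eq_constant_traces[OF assms] intro!: range_eqI[of _ _ 1])
    show "Vtraces k a b h \<subseteq> fsv.span ((\<lambda>l. edge_field k a b h (F l)) ` {0})"
    proof
      fix \<mu> assume "\<mu> \<in> Vtraces k a b h"
      then obtain c where "\<mu> = bd_trace a b h (\<lambda>i p. ncross_s (normal i) c)"
        by (auto simp: Vtraces_eq_constant_traces[OF assms])
      also have "\<dots> = (\<Sum>l\<in>{0}. fscale c (edge_field k a b h (F l)))"
        by (simp only: const edge_field_lincomb)
      also have "\<dots> \<in> fsv.span ((\<lambda>l. edge_field k a b h (F l)) ` {0})"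
        by (intro fsv.span_sum fsv.span_scale fsv.span_base) auto
      finally show "\<mu> \<in> fsv.span ((\<lambda>l. edge_field k a b h (F l)) ` {0})" .
    qed
  qed simp
  then show ?thesis
    by simp
qed

subsection \<open>Curl-free vector fields are gradients of polynomials\<close>

definition grad_monomial :: "real \<Rightarrow> real \<Rightarrow> nat \<Rightarrow> nat \<Rightarrow> real \<times> real \<Rightarrow> real \<times> real" where
  "grad_monomial a b m n p =
     (of_nat m * (fst p - a) ^ (m - 1) * (snd p - b) ^ n, of_nat n * (fst p - a) ^ m * (snd p - b) ^ (n - 1))"

lemma curl_grad_monomial: "curl_v (grad_monomial a b m n) p = 0"
proof -
  have "((\<lambda>t. of_nat m * (fst p - a) ^ (m - 1) * (t - b) ^ n) has_real_derivative
      of_nat m * (fst p - a) ^ (m - 1) * (of_nat n * (snd p - b) ^ (n - 1))) (at (snd p))"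
    and "((\<lambda>t. of_nat n * (t - a) ^ m * (snd p - b) ^ (n - 1)) has_real_derivative
      of_nat n * (of_nat m * (fst p - a) ^ (m - 1)) * (snd p - b) ^ (n - 1)) (at (fst p))"
    by (auto intro!: derivative_eq_intros)
  then show ?thesis
    by (simp add: curl_v_def dx_def dy_def grad_monomial_def comp_def DERIV_imp_deriv)
qed

definition potential_exps :: "nat \<Rightarrow> (nat \<times> nat) set" where
  "potential_exps k = {..k} \<times> {..k} \<union> {(Suc k, 0), (0, Suc k)}"

lemma potential_exps_subset: "potential_exps k \<subseteq> {..Suc k} \<times> {..Suc k}"
  by (auto simp: potential_exps_def)

lemma grad_monomial_in_Qk2:
  assumes "(m, n) \<in> potential_exps k"
  shows "grad_monomial a b m n \<in> Qk2 k"
proof -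
  have "(\<lambda>p. of_nat m * (fst p - a) ^ (m - 1) * (snd p - b) ^ n) \<in> Qk k"
    and "(\<lambda>p. of_nat n * (fst p - a) ^ m * (snd p - b) ^ (n - 1)) \<in> Qk k"
    using assms by (auto simp: potential_exps_def intro!: Qk_monomial)
  then show ?thesis
    by (simp add: Qk2_def grad_monomial_def comp_def)
qed

lemma Qk2_obtain_poly2:
  assumes "w \<in> Qk2 k"
  obtains A B where "\<And>i j. k < i \<or> k < j \<Longrightarrow> A i j = 0" "\<And>i j. k < i \<or> k < j \<Longrightarrow> B i j = 0"
    and "\<And>x y. fst (w (x, y)) = poly2 k A (x - a) (y - b)" "\<And>x y. snd (w (x, y)) = poly2 k B (x - a) (y - b)"
proof -
  obtain A where A: "\<And>i j. k < i \<or> k < j \<Longrightarrow> A i j = 0"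
    "\<And>x y. (fst \<circ> w) (x, y) = poly2 k A (x - a) (y - b)"
    using assms Qk_obtain_poly2 unfolding Qk2_def by blast
  obtain B where B: "\<And>i j. k < i \<or> k < j \<Longrightarrow> B i j = 0"
    "\<And>x y. (snd \<circ> w) (x, y) = poly2 k B (x - a) (y - b)"
    using assms Qk_obtain_poly2 unfolding Qk2_def by blast
  show ?thesis
    by (rule that[of A B]) (use A B in simp_all)
qed

lemma curl_free_coeff_relation:
  assumes "h > 0" and suppA: "\<And>i j. k < i \<or> k < j \<Longrightarrow> A i j = 0"
    and suppB: "\<And>i j. k < i \<or> k < j \<Longrightarrow> B i j = 0"
    and A: "\<And>x y. fst (w (x, y)) = poly2 k A (x - a) (y - b)"
    and B: "\<And>x y. snd (w (x, y)) = poly2 k B (x - a) (y - b)"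
    and curl: "\<forall>p \<in> square a b h. curl_v w p = 0"
  shows "of_nat (Suc j) * A i (Suc j) = of_nat (Suc i) * B (Suc i) j"
proof (cases "i \<le> k \<and> j \<le> k")
  case True
  have "poly2 k (\<lambda>i j. of_nat (Suc i) * B (Suc i) j - of_nat (Suc j) * A i (Suc j)) (x - a) (y - b) = 0"
    if "(x, y) \<in> square a b h" for x y
    using curl that dx_poly2[of B k "snd \<circ> w" a b x y] dy_poly2[of A k "fst \<circ> w" a b x y]
    by (simp add: poly2_diff curl_v_def A B suppA suppB)
  then have "\<forall>i\<le>k. \<forall>j\<le>k. of_nat (Suc i) * B (Suc i) j - of_nat (Suc j) * A i (Suc j) = 0"
    by (intro poly2_eq_0_on_square[OF assms(1), where a = a and b = b]) auto
  then show ?thesis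
    using True by simp
qed (use suppA suppB in auto)

text \<open>Integrating the first component in \<open>x\<close> and adding the part of the second component that
  depends on \<open>y\<close> only gives the coefficients of a potential.\<close>

definition potential_coeff :: "(nat \<Rightarrow> nat \<Rightarrow> real) \<Rightarrow> (nat \<Rightarrow> nat \<Rightarrow> real) \<Rightarrow> nat \<times> nat \<Rightarrow> real" where
  "potential_coeff A B l =
     (if fst l \<noteq> 0 then A (fst l - 1) (snd l) / of_nat (fst l)
      else if snd l \<noteq> 0 then B 0 (snd l - 1) / of_nat (snd l) else 0)"

lemma potential_coeff_Suc_fst: "of_nat (Suc i) * potential_coeff A B (Suc i, n) = A i n"
  by (simp add: potential_coeff_def del: of_nat_Suc)

lemma potential_coeff_Suc_snd:
  assumes "\<And>i j. of_nat (Suc j) * A i (Suc j) = of_nat (Suc i) * B (Suc i) j"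
  shows "of_nat (Suc j) * potential_coeff A B (m, Suc j) = B m j"
  using assms[where i = "m - 1" and j = j] by (cases m) (simp_all add: potential_coeff_def field_simps del: of_nat_Suc)

lemma potential_coeff_eq_0:
  assumes suppA: "\<And>i j. k < i \<or> k < j \<Longrightarrow> A i j = 0"
    and suppB: "\<And>i j. k < i \<or> k < j \<Longrightarrow> B i j = 0"
    and rel: "\<And>i j. of_nat (Suc j) * A i (Suc j) = of_nat (Suc i) * B (Suc i) j"
    and "(m, n) \<notin> potential_exps k"
  shows "potential_coeff A B (m, n) = 0"
proof (cases "m = 0")
  case True
  then have "k < n - 1"
    using assms(4) by (auto simp: potential_exps_def)
  then show ?thesis
    using True suppB by (simp add: potential_coeff_def)
next
  case False
  have "A (m - 1) n = 0"
  proof (cases "m = Suc k \<and> n \<noteq> 0 \<and> n \<le> k")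
    case True
    then show ?thesis
      using rel[where i = k and j = "n - 1"] suppB[of "Suc k" "n - 1"] by simp
  next
    case False
    then have "k < m - 1 \<or> k < n"
      using assms(4) \<open>m \<noteq> 0\<close> by (auto simp: potential_exps_def)
    then show ?thesis
      using suppA by blast
  qed
  then show ?thesis
    using False by (simp add: potential_coeff_def)
qed

lemma sum_grad_monomial:
  assumes suppA: "\<And>i j. k < i \<or> k < j \<Longrightarrow> A i j = 0"
    and suppB: "\<And>i j. k < i \<or> k < j \<Longrightarrow> B i j = 0"
    and \<phi>_x: "\<And>i n. of_nat (Suc i) * \<phi> (Suc i, n) = A i n"
    and \<phi>_y: "\<And>m j. of_nat (Suc j) * \<phi> (m, Suc j) = B m j"
  shows "(\<Sum>l\<in>{..Suc k} \<times> {..Suc k}. \<phi> l *\<^sub>R grad_monomial a b (fst l) (snd l) (x, y))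
    = (poly2 k A (x - a) (y - b), poly2 k B (x - a) (y - b))"
proof -
  let ?G = "\<Sum>l\<in>{..Suc k} \<times> {..Suc k}. \<phi> l *\<^sub>R grad_monomial a b (fst l) (snd l) (x, y)"
  have "fst ?G = (\<Sum>m\<le>Suc k. \<Sum>n\<le>Suc k. \<phi> (m, n) * (of_nat m * (x - a) ^ (m - 1) * (y - b) ^ n))"
    by (simp add: fst_sum grad_monomial_def sum.cartesian_product')
  also have "\<dots> = (\<Sum>i\<le>k. \<Sum>n\<le>Suc k. A i n * (x - a) ^ i * (y - b) ^ n)"
    by (simp only: sum.atMost_Suc_shift) (simp add: \<phi>_x[symmetric] mult_ac del: of_nat_Suc)
  also have "\<dots> = poly2 k A (x - a) (y - b)"
    by (simp add: poly2_def suppA)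
  finally have fst_G: "fst ?G = poly2 k A (x - a) (y - b)" .
  have "snd ?G = (\<Sum>m\<le>Suc k. \<Sum>n\<le>Suc k. \<phi> (m, n) * (of_nat n * (x - a) ^ m * (y - b) ^ (n - 1)))"
    by (simp add: snd_sum grad_monomial_def sum.cartesian_product')
  also have "\<dots> = (\<Sum>m\<le>Suc k. \<Sum>j\<le>k. B m j * (x - a) ^ m * (y - b) ^ j)"
    by (rule sum.cong[OF refl], subst sum.atMost_Suc_shift) (simp add: \<phi>_y[symmetric] mult_ac del: of_nat_Suc)
  also have "\<dots> = poly2 k B (x - a) (y - b)"
    by (simp add: poly2_def suppB)
  finally show ?thesis
    using fst_G by (simp add: prod_eq_iff)
qed

lemma curl_free_Qk2_eq_gradient:
  assumes "h > 0" and "w \<in> Qk2 k" and curl: "\<forall>p \<in> square a b h. curl_v w p = 0"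
  obtains \<phi> where "w = (\<lambda>p. \<Sum>l\<in>potential_exps k. \<phi> l *\<^sub>R grad_monomial a b (fst l) (snd l) p)"
proof -
  obtain A B where suppA: "\<And>i j. k < i \<or> k < j \<Longrightarrow> A i j = 0"
    and suppB: "\<And>i j. k < i \<or> k < j \<Longrightarrow> B i j = 0"
    and A: "\<And>x y. fst (w (x, y)) = poly2 k A (x - a) (y - b)"
    and B: "\<And>x y. snd (w (x, y)) = poly2 k B (x - a) (y - b)"
    using Qk2_obtain_poly2[OF assms(2)] by metis
  note rel = curl_free_coeff_relation[OF assms(1) suppA suppB A B curl]
  let ?\<phi> = "potential_coeff A B"
  have "w (x, y) = (\<Sum>l\<in>{..Suc k} \<times> {..Suc k}. ?\<phi> l *\<^sub>R grad_monomial a b (fst l) (snd l) (x, y))" for x y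
    using A B by (simp add: prod_eq_iff
        sum_grad_monomial[OF suppA suppB potential_coeff_Suc_fst potential_coeff_Suc_snd[OF rel]])
  also have "\<dots> x y = (\<Sum>l\<in>potential_exps k. ?\<phi> l *\<^sub>R grad_monomial a b (fst l) (snd l) (x, y))" for x y
    using potential_exps_subset potential_coeff_eq_0[OF suppA suppB rel]
    by (intro sum.mono_neutral_right) auto
  finally show ?thesis
    by (intro that) auto
qed

subsection \<open>Tangential traces of curl-free vector fields\<close>

definition tan_trace :: "real \<Rightarrow> real \<Rightarrow> real \<Rightarrow> (real \<times> real \<Rightarrow> real \<times> real)
    \<Rightarrow> nat \<times> (real \<times> real) \<Rightarrow> real \<times> real" where
  "tan_trace a b h w = bd_trace a b h (\<lambda>i p. ntan (normal i) (w p))"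

lemma ntan_sum: "ntan n (\<Sum>l\<in>L. c l *\<^sub>R w l) = (\<Sum>l\<in>L. c l *\<^sub>R ntan n (w l))"
  by (induction L rule: infinite_finite_induct) (simp_all add: ntan_def algebra_simps)

lemma tan_trace_lincomb:
  "tan_trace a b h (\<lambda>p. \<Sum>l\<in>L. c l *\<^sub>R w l p) = (\<Sum>l\<in>L. fscale (c l) (tan_trace a b h (w l)))"
  unfolding tan_trace_def ntan_sum by (rule bd_trace_lincomb)

text \<open>The coefficient of s^j on edge i of the tangential trace of the gradient of (x-a)^m (y-b)^n:
  up to the orientation sign of the edge, the derivative in s of s^m (y-b)^n on the horizontal
  edges (y - b = 0 for i = 0, y - b = h for i = 2) and of (x-a)^m s^n on the vertical ones
  (x - a = h for i = 1, x - a = 0 for i = 3).\<close>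

definition grad_trace_coeff :: "real \<Rightarrow> nat \<Rightarrow> nat \<Rightarrow> nat \<Rightarrow> nat \<Rightarrow> real" where
  "grad_trace_coeff h m n i j =
     (if i = 0 then (if m = Suc j then - (of_nat m * 0 ^ n) else 0)
      else if i = 1 then (if n = Suc j then - (of_nat n * h ^ m) else 0)
      else if i = 2 then (if m = Suc j then of_nat m * h ^ n else 0)
      else (if n = Suc j then of_nat n * 0 ^ m else 0))"

lemma sum_if_Suc_eq:
  assumes "m \<le> Suc k"
  shows "(\<Sum>j\<le>k. if m = Suc j then f j else 0) = (if m = 0 then 0 else f (m - 1))"
  using assms by (cases m) (simp_all add: sum.delta)

lemma tan_trace_grad_monomial:
  assumes "m \<le> Suc k" "n \<le> Suc k"
  shows "tan_trace a b h (grad_monomial a b m n) = edge_field k a b h (grad_trace_coeff h m n)"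
  unfolding tan_trace_def edge_field_def
proof (rule bd_trace_eqI)
  fix i :: nat and s assume "i < 4"
  then show "ntan (normal i) (grad_monomial a b m n (edge_point a b h i s)) =
      ncross_s (normal i) (\<Sum>j\<le>k. grad_trace_coeff h m n i j * edge_coord a b i (edge_point a b h i s) ^ j)"
    using assms
    by (elim less_4_cases) (simp_all add: grad_trace_coeff_def if_distrib[of "\<lambda>x. x * _"] sum_if_Suc_eq
        grad_monomial_def edge_point_def edge_coord_def ntan_def ncross_s_def normal_def cong: if_cong)
qed

definition trace_basis_exps :: "nat \<Rightarrow> (nat \<times> nat) set" where
  "trace_basis_exps k = (\<lambda>m. (m, 0)) ` {1..Suc k} \<union> (\<lambda>n. (0, n)) ` {1..Suc k}
     \<union> (\<lambda>m. (m, 1)) ` {1..k} \<union> (\<lambda>n. (1, n)) ` {2..k}"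

lemma sum_trace_basis_exps:
  "(\<Sum>l\<in>trace_basis_exps k. f l) = (\<Sum>m=1..Suc k. f (m, 0)) + (\<Sum>n=1..Suc k. f (0, n))
     + (\<Sum>m=1..k. f (m, 1)) + (\<Sum>n=2..k. f (1, n))"
proof -
  let ?A = "(\<lambda>m. (m, 0)) ` {1..Suc k}" and ?B = "(\<lambda>n. (0, n)) ` {1..Suc k}"
    and ?C = "(\<lambda>m. (m, 1)) ` {1..k}" and ?D = "(\<lambda>n. (1, n)) ` {2..k}"
  have "?A \<inter> ?B = {}" "(?A \<union> ?B) \<inter> ?C = {}" "(?A \<union> ?B \<union> ?C) \<inter> ?D = {}"
    by auto
  then have "sum f (?A \<union> ?B \<union> ?C \<union> ?D) = sum f ?A + sum f ?B + sum f ?C + sum f ?D"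
    by (simp add: sum.union_disjoint)
  then show ?thesis
    unfolding trace_basis_exps_def by (simp add: sum.reindex inj_on_def)
qed

lemma card_trace_basis_exps:
  assumes "k \<ge> 1"
  shows "card (trace_basis_exps k) = 4 * k + 1"
  using assms sum_trace_basis_exps[of "\<lambda>_. 1::nat" k] by simp

lemma trace_basis_exps_subset: "trace_basis_exps k \<subseteq> potential_exps k"
  by (auto simp: trace_basis_exps_def potential_exps_def)

lemma trace_basis_coeffs_independent:
  fixes c :: "nat \<times> nat \<Rightarrow> real" and h :: real and k :: nat
  defines "E i j \<equiv> \<Sum>l\<in>trace_basis_exps k. c l * grad_trace_coeff h (fst l) (snd l) i j"
  assumes "h > 0" and "k \<ge> 1" and zero: "\<forall>i<4. \<forall>j\<le>k. E i j = 0"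
  shows "\<forall>l\<in>trace_basis_exps k. c l = 0"
proof -
  note E_simps = E_def sum_trace_basis_exps grad_trace_coeff_def if_distrib[of "\<lambda>x. _ * x"]
    sum.delta power_0_left algebra_simps
  have E0: "E 0 j = - (of_nat (Suc j) * c (Suc j, 0))" if "j \<le> k" for j
    using that by (simp add: E_simps cong: if_cong sum.cong_simp)
  have E3: "E 3 j = of_nat (Suc j) * c (0, Suc j)" if "j \<le> k" for j
    using that by (simp add: E_simps cong: if_cong sum.cong_simp)
  have E2: "E 2 j = of_nat (Suc j) * (c (Suc j, 0) + h * c (Suc j, 1))" if "1 \<le> j" "j < k" for j
    using that by (simp add: E_simps cong: if_cong sum.cong_simp)
  have E1: "E 1 j = - (of_nat (Suc j) * (c (0, Suc j) + h * c (1, Suc j)))" if "1 \<le> j" "j < k" for j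
    using that by (simp add: E_simps cong: if_cong sum.cong_simp)
  have E2_0: "E 2 0 = c (1, 0) + h * c (1, 1) + (\<Sum>n=2..k. h ^ n * c (1, n))"
    using assms(3) by (simp add: E_simps cong: if_cong sum.cong_simp)
  have bottom: "c (m, 0) = 0" if "1 \<le> m" "m \<le> Suc k" for m
    using zero E0[of "m - 1"] that by (simp del: of_nat_Suc)
  have left: "c (0, n) = 0" if "1 \<le> n" "n \<le> Suc k" for n
    using zero E3[of "n - 1"] that by (simp del: of_nat_Suc)
  have right: "c (1, n) = 0" if "2 \<le> n" "n \<le> k" for n
    using zero E1[of "n - 1"] left[of n] that assms(2) by (simp del: of_nat_Suc)
  have corner: "c (1, 1) = 0"
    using zero E2_0 bottom[of 1] right assms(2) by simp
  have top: "c (m, 1) = 0" if "1 \<le> m" "m \<le> k" for m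
  proof (cases "m = 1")
    case False
    then show ?thesis
      using zero E2[of "m - 1"] bottom[of m] that assms(2) by (simp del: of_nat_Suc)
  qed (use corner in simp)
  show ?thesis
    using bottom left top right by (auto simp: trace_basis_exps_def)
qed

text \<open>On the boundary of the square, (x-a)^m (y-b)^n agrees with
  h^(n-1) (x-a)^m (y-b) + h^(m-1) (x-a) (y-b)^n - h^(m+n-2) (x-a) (y-b).\<close>

lemma grad_trace_coeff_interior:
  assumes "1 \<le> m" "1 \<le> n"
  shows "grad_trace_coeff h m n i j = h ^ (n - 1) * grad_trace_coeff h m 1 i j
    + h ^ (m - 1) * grad_trace_coeff h 1 n i j - h ^ (m + n - 2) * grad_trace_coeff h 1 1 i j"
proof -
  obtain m' n' where "m = Suc m'" "n = Suc n'"
    using assms by (metis Suc_le_D One_nat_def)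
  then show ?thesis
    by (auto simp: grad_trace_coeff_def power_add algebra_simps)
qed

definition grad_trace :: "nat \<Rightarrow> real \<Rightarrow> real \<Rightarrow> real \<Rightarrow> nat \<times> nat \<Rightarrow> nat \<times> (real \<times> real) \<Rightarrow> real \<times> real" where
  "grad_trace k a b h l = edge_field k a b h (grad_trace_coeff h (fst l) (snd l))"

lemma potential_exps_cases:
  assumes "(m, n) \<in> potential_exps k"
  obtains "(m, n) = (0, 0)" | "(m, n) \<in> trace_basis_exps k" | "2 \<le> m" "m \<le> k" "2 \<le> n" "n \<le> k"
proof -
  have "(m, n) = (0, 0) \<or> (m, n) \<in> trace_basis_exps k \<or> (2 \<le> m \<and> m \<le> k \<and> 2 \<le> n \<and> n \<le> k)"
    using assms by (auto simp: potential_exps_def trace_basis_exps_def image_iff)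
  then show ?thesis
    using that by blast
qed

lemma grad_trace_in_span:
  assumes "l \<in> potential_exps k"
  shows "grad_trace k a b h l \<in> fsv.span (grad_trace k a b h ` trace_basis_exps k)"
proof -
  obtain m n where l: "l = (m, n)"
    by fastforce
  with assms have "(m, n) \<in> potential_exps k"
    by simp
  then have "grad_trace k a b h (m, n) \<in> fsv.span (grad_trace k a b h ` trace_basis_exps k)"
  proof (cases rule: potential_exps_cases)
    case 1
    have "grad_trace k a b h (0, 0) = edge_field k a b h (\<lambda>_ _. 0)"
      unfolding grad_trace_def by (rule edge_field_cong) (simp add: grad_trace_coeff_def)
    then show ?thesis
      using 1 by (simp add: edge_field_zero fsv.span_zero)
  next
    case 2
    then show ?thesis
      by (intro fsv.span_base imageI)
  next
    case 3
    define L where "L = {(m, 1), (1, n), (1::nat, 1::nat)}"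
    define c where "c l' = (if l' = (m, 1) then h ^ (n - 1) else if l' = (1, n) then h ^ (m - 1)
        else - (h ^ (m + n - 2)))" for l'
    have "grad_trace k a b h (m, n) =
        edge_field k a b h (\<lambda>i j. \<Sum>l'\<in>L. c l' * grad_trace_coeff h (fst l') (snd l') i j)"
      unfolding grad_trace_def
      using 3 by (intro edge_field_cong) (simp add: L_def c_def grad_trace_coeff_interior[of m n])
    also have "\<dots> = (\<Sum>l'\<in>L. fscale (c l') (grad_trace k a b h l'))"
      by (simp add: edge_field_lincomb grad_trace_def)
    also have "\<dots> \<in> fsv.span (grad_trace k a b h ` trace_basis_exps k)"
      using 3 by (intro fsv.span_sum fsv.span_scale fsv.span_base) (auto simp: L_def trace_basis_exps_def)
    finally show ?thesis .
  qed
  then show ?thesis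
    using l by simp
qed

lemma grad_trace_in_Wtraces:
  assumes "l \<in> potential_exps k"
  shows "grad_trace k a b h l \<in> Wtraces k a b h"
proof -
  have "grad_trace k a b h l = tan_trace a b h (grad_monomial a b (fst l) (snd l))"
    using assms potential_exps_subset by (force simp: grad_trace_def tan_trace_grad_monomial)
  moreover have "grad_monomial a b (fst l) (snd l) \<in> Qk2 k"
    using assms by (intro grad_monomial_in_Qk2) simp
  ultimately show ?thesis
    unfolding Wtraces_def tan_trace_def
    by (intro CollectI exI[of _ "grad_monomial a b (fst l) (snd l)"]) (simp add: curl_grad_monomial)
qed

lemma Wtraces_subset_span:
  assumes "h > 0"
  shows "Wtraces k a b h \<subseteq> fsv.span (grad_trace k a b h ` trace_basis_exps k)"
proof
  fix \<mu> assume "\<mu> \<in> Wtraces k a b h"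
  then obtain w where \<mu>: "\<mu> = tan_trace a b h w"
    and w: "w \<in> Qk2 k" "\<forall>p \<in> square a b h. curl_v w p = 0"
    by (auto simp: Wtraces_def tan_trace_def)
  obtain \<phi> where "w = (\<lambda>p. \<Sum>l\<in>potential_exps k. \<phi> l *\<^sub>R grad_monomial a b (fst l) (snd l) p)"
    by (rule curl_free_Qk2_eq_gradient[OF assms w])
  then have "\<mu> = (\<Sum>l\<in>potential_exps k. fscale (\<phi> l) (tan_trace a b h (grad_monomial a b (fst l) (snd l))))"
    by (simp add: \<mu> tan_trace_lincomb)
  also have "\<dots> = (\<Sum>l\<in>potential_exps k. fscale (\<phi> l) (grad_trace k a b h l))"
    using potential_exps_subset
    by (intro sum.cong refl) (force simp: grad_trace_def tan_trace_grad_monomial)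
  also have "\<dots> \<in> fsv.span (grad_trace k a b h ` trace_basis_exps k)"
    by (intro fsv.span_sum fsv.span_scale grad_trace_in_span)
  finally show "\<mu> \<in> fsv.span (grad_trace k a b h ` trace_basis_exps k)" .
qed

lemma fdim_Wtraces:
  assumes "h > 0" and "k \<ge> 1"
  shows "fdim (Wtraces k a b h) = 4 * k + 1"
proof -
  have "fdim (Wtraces k a b h) = card (trace_basis_exps k)"
  proof (rule fdim_eq_card_edge_fields[OF assms(1)])
    show "\<forall>l\<in>trace_basis_exps k. c l = 0"
      if "\<forall>i<4. \<forall>j\<le>k. (\<Sum>l\<in>trace_basis_exps k. c l * grad_trace_coeff h (fst l) (snd l) i j) = 0" for c
      using trace_basis_coeffs_independent[OF assms that] .
    show "(\<lambda>l. edge_field k a b h (grad_trace_coeff h (fst l) (snd l))) ` trace_basis_exps k \<subseteq> Wtraces k a b h"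
      using grad_trace_in_Wtraces trace_basis_exps_subset by (force simp: grad_trace_def)
    show "Wtraces k a b h \<subseteq> fsv.span ((\<lambda>l. edge_field k a b h (grad_trace_coeff h (fst l) (snd l))) ` trace_basis_exps k)"
      using Wtraces_subset_span[OF assms(1)] by (simp add: grad_trace_def[abs_def])
  qed (simp add: finite_subset[OF trace_basis_exps_subset] potential_exps_def)
  then show ?thesis
    using card_trace_basis_exps[OF assms(2)] by simp
qed

theorem lemma5p8:
  fixes a b h :: real and k :: nat
  assumes "h > 0" and "k \<ge> 1"
  shows "I_M k a b h = 2"
  using fdim_Mspace[OF assms(1)] fdim_Vtraces[OF assms(1)] fdim_Wtraces[OF assms]
  by (simp add: I_M_def)

end
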